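(* Let $n \ge 1$ and $0 \le k \le n$ be integers, and let $A_0, A_1$ be real symmetric $n\times n$ matrices with $A_1$ positive definite. Consider the sparse QCQP $$\mathcal{Q}:\quad \max\ x^{\intercal}A_0x \quad\text{s.t.}\quad x^{\intercal}A_1x = 1,\ x\in\mathbb{R}^n,\ |\mathrm{supp}(x)|\le k.$$ Let $p$ be an LPM polynomial of degree $k$ with nonnegative coefficients, and let $g(t) = p(A_1 t - A_0)$. Then there exists a feasible point $x$ of $\mathcal{Q}$ whose objective value $x^{\intercal}A_0x$ is at least $\eta_g$. In particular, $\eta_g$ is a lower bound for the optimal value of $\mathcal{Q}$.
   Context: $\mathrm{supp}(x) = \{i\in[n] : x_i\neq 0\}$. For a symmetric matrix $X$ and $S\subseteq[n]$, $X|_S$ denotes the principal submatrix of $X$ indexed by $S$. An LPM (linear combination of principal minors) polynomial of degree $k$ is a polynomial in the entries of a symmetric $n\times n$ matrix $X$ that is not identically zero and has the form $p(X)=\sum_{S\subseteq[n],|S|=k} a_S\det(X|_S)$ for real coefficients $a_S$. For a univariate polynomial $g$, $\eta_g$ denotes the largest real root of $g$, or $-\infty$ if $g$ has no real roots. *)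

theory Defs
  imports "HOL-Analysis.Analysis" "HOL-Library.Extended_Real"
begin

definition supp :: "real ^ 'n \<Rightarrow> 'n set" where
  "supp x = {i. x $ i \<noteq> 0}"

definition symmetric_mat :: "real ^ 'n ^ 'n \<Rightarrow> bool" where
  "symmetric_mat A \<longleftrightarrow> transpose A = A"

definition pos_def :: "real ^ 'n ^ 'n \<Rightarrow> bool" where
  "pos_def A \<longleftrightarrow> symmetric_mat A \<and> (\<forall>x. x \<noteq> 0 \<longrightarrow> x \<bullet> (A *v x) > 0)"

text \<open>Determinant of the principal submatrix X|_S (Leibniz formula over the index set S,
  which is literally how det is defined in HOL-Analysis, restricted to S).\<close>
definition principal_minor :: "real ^ 'n ^ 'n \<Rightarrow> 'n set \<Rightarrow> real" where
  "principal_minor X S =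
     (\<Sum>p \<in> {p. p permutes S}. of_int (sign p) * (\<Prod>i\<in>S. X $ i $ p i))"

definition lpm :: "nat \<Rightarrow> ('n set \<Rightarrow> real) \<Rightarrow> real ^ 'n ^ 'n \<Rightarrow> real" where
  "lpm k a X = (\<Sum>S \<in> {S. card S = k}. a S * principal_minor X S)"

definition is_lpm_poly :: "nat \<Rightarrow> ('n::finite set \<Rightarrow> real) \<Rightarrow> bool" where
  "is_lpm_poly k a \<longleftrightarrow> k \<le> CARD('n) \<and> (\<exists>X. symmetric_mat X \<and> lpm k a X \<noteq> 0)"

definition largest_root :: "(real \<Rightarrow> real) \<Rightarrow> ereal" where
  "largest_root g = (if {t. g t = 0} = {} then -\<infinity> else Sup (ereal ` {t. g t = 0}))"

definition qcqp_feasible :: "real ^ 'n ^ 'n \<Rightarrow> nat \<Rightarrow> real ^ 'n \<Rightarrow> bool" where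
  "qcqp_feasible A1 k x \<longleftrightarrow> x \<bullet> (A1 *v x) = 1 \<and> card (supp x) \<le> k"

end

theory Submission
  imports Defs
begin

text \<open>
  Let \<open>\<eta>\<close> be a root of \<open>g\<close>. If every feasible point had objective value below \<open>\<eta>\<close>,
  then the quadratic form of \<open>\<eta> A\<^sub>1 - A\<^sub>0\<close> would be positive on every coordinate subspace
  spanned by \<open>k\<close> indices, so all principal \<open>k\<close>-minors of \<open>\<eta> A\<^sub>1 - A\<^sub>0\<close> would be positive.
  As the coefficients of \<open>p\<close> are nonnegative and not all zero, this forces \<open>g \<eta> > 0\<close>.
  Hence every root of \<open>g\<close> is dominated by some feasible objective value, and since the
  feasible set is compact the objective attains a maximum bounding all roots at once.
\<close>

lemma quadratic_form_scaleR:
  fixes A :: "real^'n::finite^'n"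
  shows "(c *\<^sub>R x) \<bullet> (A *v (c *\<^sub>R x)) = c\<^sup>2 * (x \<bullet> (A *v x))"
  by (simp add: matrix_vector_mult_scaleR power2_eq_square)

lemma det_nonzero_if_pos_quadratic_form:
  fixes P :: "real^'n::finite^'n"
  assumes "\<forall>x. x \<noteq> 0 \<longrightarrow> x \<bullet> (P *v x) > 0"
  shows "det P \<noteq> 0"
proof -
  have "\<forall>x. P *v x = 0 \<longrightarrow> x = 0"
    using assms by (metis inner_zero_right less_irrefl)
  then show ?thesis
    using invertible_det_nz invertible_left_inverse matrix_left_invertible_ker by blast
qed

text \<open>The determinant cannot change sign along the segment from the identity to \<open>P\<close>,
  since every matrix on it has a positive quadratic form.\<close>
lemma det_pos_if_pos_quadratic_form:
  fixes P :: "real^'n::finite^'n"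
  assumes pos: "\<forall>x. x \<noteq> 0 \<longrightarrow> x \<bullet> (P *v x) > 0"
  shows "det P > 0"
proof (rule ccontr)
  assume "\<not> det P > 0"
  define Q where "Q s = s *\<^sub>R P + (1 - s) *\<^sub>R (mat 1 :: real^'n^'n)" for s :: real
  have "continuous_on {0..1} (\<lambda>s. det (Q s))"
    unfolding det_def Q_def by (intro continuous_intros)
  moreover have "det (Q 1) \<le> 0" "0 \<le> det (Q 0)"
    using \<open>\<not> det P > 0\<close> by (simp_all add: Q_def)
  ultimately obtain s where s: "0 \<le> s" "s \<le> 1" "det (Q s) = 0"
    using IVT2'[of "\<lambda>s. det (Q s)" 1 0 0] by auto
  have "x \<bullet> (Q s *v x) > 0" if "x \<noteq> 0" for x
  proof -
    have "x \<bullet> (Q s *v x) = s * (x \<bullet> (P *v x)) + (1 - s) * (x \<bullet> x)"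
      by (simp add: Q_def matrix_vector_mult_add_rdistrib
          scaleR_matrix_vector_assoc[symmetric] inner_add_right)
    moreover have "x \<bullet> (P *v x) > 0" "x \<bullet> x > 0"
      using pos that by auto
    ultimately show ?thesis
      using s by (cases "s = 1") (auto intro: add_pos_nonneg add_nonneg_pos)
  qed
  then show False
    using det_nonzero_if_pos_quadratic_form s(3) by blast
qed

definition pos_def_on :: "'n set \<Rightarrow> real^'n^'n \<Rightarrow> bool" where
  "pos_def_on S M \<longleftrightarrow> (\<forall>x. x \<noteq> 0 \<and> supp x \<subseteq> S \<longrightarrow> x \<bullet> (M *v x) > 0)"

definition restrict_vec :: "'n set \<Rightarrow> real^'n \<Rightarrow> real^'n" where
  "restrict_vec S x = (\<chi> i. if i \<in> S then x $ i else 0)"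

definition extend_by_identity :: "real^'n^'n \<Rightarrow> 'n set \<Rightarrow> real^'n^'n" where
  "extend_by_identity M S = (\<chi> i j. if i \<in> S \<and> j \<in> S then M $ i $ j else if i = j then 1 else 0)"

text \<open>Only permutations of \<open>S\<close> contribute to the Leibniz expansion: any permutation moving
  an index outside \<open>S\<close> picks up an off-diagonal zero of the identity block.\<close>
lemma det_extend_by_identity:
  fixes M :: "real^'n::finite^'n"
  shows "det (extend_by_identity M S) = principal_minor M S"
proof -
  let ?E = "extend_by_identity M S"
  have "det ?E = (\<Sum>p \<in> {p. p permutes S}. of_int (sign p) * (\<Prod>i\<in>UNIV. ?E $ i $ p i))"
    unfolding det_def
  proof (rule sum.mono_neutral_right)
    show "finite {p. p permutes (UNIV::'n set)}"
      by (simp add: finite_permutations)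
    show "{p. p permutes S} \<subseteq> {p. p permutes UNIV}"
      using permutes_subset by blast
    show "\<forall>p\<in>{p. p permutes UNIV} - {p. p permutes S}.
            of_int (sign p) * (\<Prod>i\<in>UNIV. ?E $ i $ p i) = 0"
    proof
      fix p assume "p \<in> {p. p permutes UNIV} - {p. p permutes S}"
      then obtain i where "i \<notin> S" "p i \<noteq> i"
        unfolding permutes_def by auto
      then have "?E $ i $ p i = 0"
        by (simp add: extend_by_identity_def)
      then show "of_int (sign p) * (\<Prod>i\<in>UNIV. ?E $ i $ p i) = 0"
        by auto
    qed
  qed
  also have "\<dots> = principal_minor M S"
    unfolding principal_minor_def
  proof (rule sum.cong[OF refl])
    fix p assume "p \<in> {p. p permutes S}"
    then have p: "p permutes S" by simp
    have "(\<Prod>i\<in>UNIV. ?E $ i $ p i) = (\<Prod>i\<in>S. ?E $ i $ p i) * (\<Prod>i\<in>UNIV - S. ?E $ i $ p i)"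
      using prod.subset_diff[of S UNIV] by (simp add: mult.commute)
    also have "(\<Prod>i\<in>UNIV - S. ?E $ i $ p i) = 1"
      using p by (intro prod.neutral) (auto simp: extend_by_identity_def permutes_not_in)
    also have "(\<Prod>i\<in>S. ?E $ i $ p i) = (\<Prod>i\<in>S. M $ i $ p i)"
      using p by (intro prod.cong) (auto simp: extend_by_identity_def permutes_in_image)
    finally show "of_int (sign p) * (\<Prod>i\<in>UNIV. ?E $ i $ p i) = of_int (sign p) * (\<Prod>i\<in>S. M $ i $ p i)"
      by simp
  qed
  finally show ?thesis .
qed

lemma quadratic_form_extend_by_identity:
  fixes M :: "real^'n::finite^'n"
  shows "x \<bullet> (extend_by_identity M S *v x)
           = restrict_vec S x \<bullet> (M *v restrict_vec S x) + (\<Sum>i\<in>UNIV - S. (x $ i)\<^sup>2)"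
proof -
  let ?y = "restrict_vec S x"
  have "x \<bullet> (extend_by_identity M S *v x)
          = (\<Sum>i\<in>UNIV. \<Sum>j\<in>UNIV. ?y $ i * M $ i $ j * ?y $ j + (if i = j \<and> i \<notin> S then x $ i * x $ j else 0))"
    by (simp add: inner_vec_def matrix_vector_mult_def sum_distrib_left mult.assoc)
       (intro sum.cong refl, auto simp: restrict_vec_def extend_by_identity_def)
  also have "\<dots> = ?y \<bullet> (M *v ?y) + (\<Sum>i\<in>UNIV. \<Sum>j\<in>UNIV. if i = j \<and> i \<notin> S then x $ i * x $ j else 0)"
    by (simp add: sum.distrib inner_vec_def matrix_vector_mult_def sum_distrib_left mult.assoc)
  also have "(\<Sum>i\<in>UNIV. \<Sum>j\<in>UNIV. if i = j \<and> i \<notin> S then x $ i * x $ j else 0)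
               = (\<Sum>i\<in>UNIV. if i \<notin> S then (x $ i)\<^sup>2 else 0)"
    by (intro sum.cong refl) (auto simp: power2_eq_square)
  also have "\<dots> = (\<Sum>i\<in>UNIV - S. (x $ i)\<^sup>2)"
    by (simp add: sum.If_cases Diff_eq Collect_neg_eq)
  finally show ?thesis .
qed

lemma pos_quadratic_form_extend_by_identity:
  fixes M :: "real^'n::finite^'n"
  assumes "pos_def_on S M" and "x \<noteq> 0"
  shows "x \<bullet> (extend_by_identity M S *v x) > 0"
proof (cases "restrict_vec S x = 0")
  case True
  then have "x $ i = 0" if "i \<in> S" for i
    using that by (auto simp: restrict_vec_def vec_eq_iff split: if_splits)
  moreover obtain j where "x $ j \<noteq> 0"
    using \<open>x \<noteq> 0\<close> by (auto simp: vec_eq_iff)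
  ultimately have "(\<Sum>i\<in>UNIV - S. (x $ i)\<^sup>2) > 0"
    by (intro sum_pos2[of _ j]) auto
  then show ?thesis
    using True by (simp add: quadratic_form_extend_by_identity)
next
  case False
  moreover have "supp (restrict_vec S x) \<subseteq> S"
    by (auto simp: supp_def restrict_vec_def)
  ultimately have "restrict_vec S x \<bullet> (M *v restrict_vec S x) > 0"
    using assms(1) by (simp add: pos_def_on_def)
  moreover have "(\<Sum>i\<in>UNIV - S. (x $ i)\<^sup>2) \<ge> 0"
    by (simp add: sum_nonneg)
  ultimately show ?thesis
    by (simp add: quadratic_form_extend_by_identity)
qed

lemma principal_minor_pos_if_pos_def_on:
  fixes M :: "real^'n::finite^'n"
  assumes "pos_def_on S M"
  shows "principal_minor M S > 0"
  using det_pos_if_pos_quadratic_form[of "extend_by_identity M S"]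
    pos_quadratic_form_extend_by_identity[OF assms]
  by (simp add: det_extend_by_identity)

lemma lpm_pos_if_pos_def_on:
  fixes M :: "real^'n::finite^'n"
  assumes "is_lpm_poly k a" and "\<forall>S. card S = k \<longrightarrow> a S \<ge> 0"
    and "\<And>S. card S = k \<Longrightarrow> pos_def_on S M"
  shows "lpm k a M > 0"
proof -
  have fin: "finite {S::'n set. card S = k}"
    by simp
  obtain X where "lpm k a X \<noteq> 0"
    using assms(1) unfolding is_lpm_poly_def by blast
  then obtain S0 where "card S0 = k" "a S0 \<noteq> 0"
    unfolding lpm_def by (metis (mono_tags, lifting) mem_Collect_eq mult_eq_0_iff sum.neutral)
  then have "a S0 > 0"
    using assms(2) by (simp add: order_less_le)
  have minor_pos: "principal_minor M S > 0" if "card S = k" for S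
    using that assms(3) principal_minor_pos_if_pos_def_on by blast
  show ?thesis
    unfolding lpm_def
  proof (rule sum_pos2[OF fin, of S0])
    show "S0 \<in> {S. card S = k}" "0 < a S0 * principal_minor M S0"
      using \<open>card S0 = k\<close> \<open>a S0 > 0\<close> minor_pos by simp_all
    show "0 \<le> a S * principal_minor M S" if "S \<in> {S. card S = k}" for S
      using that assms(2) minor_pos by (simp add: less_imp_le)
  qed
qed

text \<open>Normalising a \<open>k\<close>-sparse vector \<open>x\<close> to \<open>x\<^sup>T A\<^sub>1 x = 1\<close> turns the bound on feasible
  objective values into \<open>x\<^sup>T A\<^sub>0 x < r x\<^sup>T A\<^sub>1 x\<close>.\<close>
lemma pos_def_on_shift_if_objective_below:
  fixes A0 A1 :: "real^'n::finite^'n"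
  assumes "pos_def A1" and below: "\<And>y. qcqp_feasible A1 k y \<Longrightarrow> y \<bullet> (A0 *v y) < r"
    and "card S \<le> k"
  shows "pos_def_on S (r *\<^sub>R A1 - A0)"
  unfolding pos_def_on_def
proof (intro allI impI)
  fix x :: "real^'n" assume x: "x \<noteq> 0 \<and> supp x \<subseteq> S"
  define c where "c = x \<bullet> (A1 *v x)"
  have "c > 0"
    using assms(1) x by (simp add: c_def pos_def_def)
  define y where "y = (1 / sqrt c) *\<^sub>R x"
  have "y \<bullet> (A1 *v y) = (1 / sqrt c)\<^sup>2 * c"
    unfolding y_def c_def by (rule quadratic_form_scaleR)
  also have "\<dots> = 1"
    using \<open>c > 0\<close> by (simp add: power_divide)
  finally have "y \<bullet> (A1 *v y) = 1" .
  moreover have "card (supp y) \<le> k"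
    using \<open>c > 0\<close> x assms(3) card_mono[of S "supp x"] by (simp add: y_def supp_def)
  ultimately have "y \<bullet> (A0 *v y) < r"
    by (simp add: below qcqp_feasible_def)
  moreover have "y \<bullet> (A0 *v y) = (1 / sqrt c)\<^sup>2 * (x \<bullet> (A0 *v x))"
    unfolding y_def by (rule quadratic_form_scaleR)
  ultimately have "x \<bullet> (A0 *v x) < r * c"
    using \<open>c > 0\<close> by (simp add: field_simps)
  moreover have "x \<bullet> ((r *\<^sub>R A1 - A0) *v x) = r * c - x \<bullet> (A0 *v x)"
    by (simp add: c_def matrix_vector_mult_diff_rdistrib
        scaleR_matrix_vector_assoc[symmetric] inner_diff_right)
  ultimately show "x \<bullet> ((r *\<^sub>R A1 - A0) *v x) > 0"
    by simp
qed

lemma lpm_root_le_feasible_objective: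
  fixes A0 A1 :: "real^'n::finite^'n"
  assumes "pos_def A1" and "is_lpm_poly k a" and "\<forall>S. card S = k \<longrightarrow> a S \<ge> 0"
    and "lpm k a (r *\<^sub>R A1 - A0) = 0"
  shows "\<exists>y. qcqp_feasible A1 k y \<and> r \<le> y \<bullet> (A0 *v y)"
proof (rule ccontr)
  assume "\<nexists>y. qcqp_feasible A1 k y \<and> r \<le> y \<bullet> (A0 *v y)"
  then have "\<And>y. qcqp_feasible A1 k y \<Longrightarrow> y \<bullet> (A0 *v y) < r"
    by force
  then have "lpm k a (r *\<^sub>R A1 - A0) > 0"
    using assms(1-3) by (intro lpm_pos_if_pos_def_on pos_def_on_shift_if_objective_below) auto
  with assms(4) show False
    by simp
qed

lemma pos_quadratic_form_coercive:
  fixes A :: "real^'n::finite^'n"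
  assumes pos: "\<forall>x. x \<noteq> 0 \<longrightarrow> x \<bullet> (A *v x) > 0"
  obtains c where "c > 0" "\<And>x. c * (norm x)\<^sup>2 \<le> x \<bullet> (A *v x)"
proof -
  have cont: "continuous_on (sphere 0 1) (\<lambda>x::real^'n. x \<bullet> (A *v x))"
    by (intro continuous_intros)
  obtain u where u: "u \<in> sphere 0 1" "\<And>y. y \<in> sphere 0 1 \<Longrightarrow> u \<bullet> (A *v u) \<le> y \<bullet> (A *v y)"
    using continuous_attains_inf[OF compact_sphere _ cont] by auto
  have "u \<noteq> 0"
    using u(1) by auto
  then have "u \<bullet> (A *v u) > 0"
    using pos by blast
  moreover have "u \<bullet> (A *v u) * (norm x)\<^sup>2 \<le> x \<bullet> (A *v x)" for x
  proof (cases "x = 0")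
    case False
    have "u \<bullet> (A *v u) \<le> ((1 / norm x) *\<^sub>R x) \<bullet> (A *v ((1 / norm x) *\<^sub>R x))"
      using False by (intro u(2)) simp
    also have "\<dots> = (1 / norm x)\<^sup>2 * (x \<bullet> (A *v x))"
      by (rule quadratic_form_scaleR)
    finally show ?thesis
      using False by (simp add: field_simps)
  qed simp
  ultimately show ?thesis
    using that by blast
qed

lemma closed_sparse_vectors: "closed {x::real^'n::finite. card (supp x) \<le> k}"
proof -
  have "{x::real^'n. card (supp x) \<le> k} = (\<Union>T\<in>{T. card T \<le> k}. {x. \<forall>i. i \<notin> T \<longrightarrow> x $ i = 0})"
    by (auto simp: supp_def intro: le_trans[OF card_mono])
  moreover have "closed {x::real^'n. \<forall>i. i \<notin> T \<longrightarrow> x $ i = 0}" for T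
    by (intro closed_Collect_all closed_Collect_imp closed_Collect_eq continuous_intros) auto
  ultimately show ?thesis
    by (metis (no_types, lifting) closed_UN finite)
qed

lemma compact_qcqp_feasible:
  fixes A1 :: "real^'n::finite^'n"
  assumes "pos_def A1"
  shows "compact {x. qcqp_feasible A1 k x}"
proof -
  obtain c where c: "c > 0" "\<And>x. c * (norm x)\<^sup>2 \<le> x \<bullet> (A1 *v x)"
    using pos_quadratic_form_coercive assms unfolding pos_def_def by blast
  have "norm x \<le> sqrt (1 / c)" if "qcqp_feasible A1 k x" for x
  proof -
    have "(norm x)\<^sup>2 \<le> 1 / c"
      using c(2)[of x] that \<open>c > 0\<close> by (simp add: qcqp_feasible_def field_simps)
    then show ?thesis
      by (simp add: real_le_rsqrt)
  qed
  then have "bounded {x. qcqp_feasible A1 k x}"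
    unfolding bounded_iff by blast
  moreover have "{x. qcqp_feasible A1 k x} = {x. x \<bullet> (A1 *v x) = 1} \<inter> {x. card (supp x) \<le> k}"
    by (auto simp: qcqp_feasible_def)
  moreover have "closed {x::real^'n. x \<bullet> (A1 *v x) = 1}"
    by (intro closed_Collect_eq continuous_intros)
  ultimately show ?thesis
    using closed_sparse_vectors[of k] by (auto simp: compact_eq_bounded_closed)
qed

lemma largest_root_le:
  assumes "\<And>t. g t = 0 \<Longrightarrow> ereal t \<le> B"
  shows "largest_root g \<le> B"
  using assms by (auto simp: largest_root_def intro: Sup_least)

theorem mainTheorem1:
  fixes A0 A1 :: "real ^ 'n::finite ^ 'n" and k :: nat and a :: "'n set \<Rightarrow> real"
  assumes "k \<le> CARD('n)"
    and "symmetric_mat A0" and "pos_def A1"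
    and "is_lpm_poly k a"
    and "\<forall>S. card S = k \<longrightarrow> a S \<ge> 0"
  defines "g \<equiv> (\<lambda>t::real. lpm k a (t *\<^sub>R A1 - A0))"
  shows "(largest_root g = -\<infinity> \<or>
           (\<exists>x. qcqp_feasible A1 k x \<and> largest_root g \<le> ereal (x \<bullet> (A0 *v x))))
         \<and> largest_root g \<le> (SUP x \<in> {x. qcqp_feasible A1 k x}. ereal (x \<bullet> (A0 *v x)))"
proof -
  let ?F = "{x. qcqp_feasible A1 k x}"
  have root_bound: "\<exists>y\<in>?F. r \<le> y \<bullet> (A0 *v y)" if "g r = 0" for r
    using lpm_root_le_feasible_objective[OF assms(3-5)] that by (simp add: g_def)
  show ?thesis
  proof (cases "\<exists>r. g r = 0")
    case False
    then show ?thesis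
      by (simp add: largest_root_def)
  next
    case True
    then have "?F \<noteq> {}"
      using root_bound by blast
    moreover have "continuous_on ?F (\<lambda>x. x \<bullet> (A0 *v x))"
      by (intro continuous_intros)
    ultimately obtain xm where xm: "xm \<in> ?F" "\<And>y. y \<in> ?F \<Longrightarrow> y \<bullet> (A0 *v y) \<le> xm \<bullet> (A0 *v xm)"
      using continuous_attains_sup[OF compact_qcqp_feasible[OF assms(3)]] by blast
    have "largest_root g \<le> ereal (xm \<bullet> (A0 *v xm))"
      using root_bound xm(2) by (force intro: largest_root_le)
    moreover have "ereal (xm \<bullet> (A0 *v xm)) \<le> (SUP x \<in> ?F. ereal (x \<bullet> (A0 *v x)))"
      using xm(1) by (rule SUP_upper)
    ultimately show ?thesis
      using xm(1) by (auto intro: order_trans)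
  qed
qed

end
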